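(* There exists an infinite family of Boolean matrices $(A_n)_{n}$, with $A_n$ of size $n\times n$, such that for each $n$, every cancellation-free linear circuit computing $A_n$ has size at least $(2-o(1))$ times the size of a smallest linear circuit (cancellations allowed) computing $A_n$. Consequently the cancellation ratio satisfies $\rho(n)\geq 2-o(1)$.
   Context: A linear circuit over $\mathbb{F}_2$ with inputs $x_1,\ldots,x_n$ is a directed acyclic graph whose in-degree-0 nodes are the inputs and whose other nodes (gates) have in-degree 2 and compute the sum over $\mathbb{F}_2$ (XOR) of their two children; $m$ nodes are designated as outputs $y_1,\ldots,y_m$. The circuit computes the Boolean $m\times n$ matrix $A$ if $\mathbf{y}=A\mathbf{x}$ for all $\mathbf{x}\in\mathbb{F}_2^n$ (output $y_i$ computes the $i$-th row). The size of a circuit is its number of gates. Each node $u$ computes a parity of a subset of inputs; its value vector $\kappa(u)\in\mathbb{F}_2^n$ has $\kappa(u)_i=1$ iff $x_i$ occurs in that parity (so $\kappa(x_i)=e^{(i)}$ and $\kappa(u)=\kappa(w)\oplus\kappa(t)$ for a gate with children $w,t$). A linear circuit is cancellation-free if whenever there is a directed path from a node $w$ to a node $u$, we have $\kappa(u)\geq\kappa(w)$ in the coordinatewise order. The cancellation ratio $\rho(n)$ is the maximum, over $n\times n$ Boolean matrices $A$, of the ratio between the size of a smallest cancellation-free linear circuit computing $A$ and the size of a smallest linear circuit computing $A$. *)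

theory Defs
  imports Complex_Main
begin

(* A linear circuit over F_2 with n inputs is given by a list gs of gates in
   topological order.  Nodes 0..n-1 are the inputs x_1..x_n; node n+k is gate k.
   Outputs: outs i is the node designated as output y_{i+1}, for i < m.
   Vectors in F_2^n are represented as nat => bool (coordinate j <-> x_{j+1}). *)

definition wf_circuit :: "nat \<Rightarrow> (nat \<times> nat) list \<Rightarrow> nat \<Rightarrow> (nat \<Rightarrow> nat) \<Rightarrow> bool" where
  "wf_circuit n gs m outs \<longleftrightarrow>
     (\<forall>k < length gs. fst (gs ! k) < n + k \<and> snd (gs ! k) < n + k \<and> fst (gs ! k) \<noteq> snd (gs ! k))
     \<and> (\<forall>i < m. outs i < n + length gs)"

definition node_values :: "nat \<Rightarrow> (nat \<times> nat) list \<Rightarrow> (nat \<Rightarrow> bool) list" where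
  "node_values n gs =
     fold (\<lambda>(a, b) vs. vs @ [(\<lambda>j. (vs ! a) j \<noteq> (vs ! b) j)]) gs (map (\<lambda>i j. j = i) [0..<n])"

definition kappa :: "nat \<Rightarrow> (nat \<times> nat) list \<Rightarrow> nat \<Rightarrow> (nat \<Rightarrow> bool)" where
  "kappa n gs v = node_values n gs ! v"

definition circuit_edges :: "nat \<Rightarrow> (nat \<times> nat) list \<Rightarrow> (nat \<times> nat) set" where
  "circuit_edges n gs = {(c, n + k) | c k. k < length gs \<and> (c = fst (gs ! k) \<or> c = snd (gs ! k))}"

definition cancellation_free :: "nat \<Rightarrow> (nat \<times> nat) list \<Rightarrow> bool" where
  "cancellation_free n gs \<longleftrightarrow>
     (\<forall>w u. (w, u) \<in> (circuit_edges n gs)\<^sup>* \<longrightarrow> kappa n gs w \<le> kappa n gs u)"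

definition computes :: "nat \<Rightarrow> nat \<Rightarrow> (nat \<times> nat) list \<Rightarrow> (nat \<Rightarrow> nat) \<Rightarrow> (nat \<Rightarrow> nat \<Rightarrow> bool) \<Rightarrow> bool" where
  "computes n m gs outs A \<longleftrightarrow> wf_circuit n gs m outs \<and>
     (\<forall>i < m. \<forall>j. kappa n gs (outs i) j = (j < n \<and> A i j))"

definition min_size :: "nat \<Rightarrow> nat \<Rightarrow> (nat \<Rightarrow> nat \<Rightarrow> bool) \<Rightarrow> nat" where
  "min_size n m A = (LEAST s. \<exists>gs outs. computes n m gs outs A \<and> length gs = s)"

definition cf_min_size :: "nat \<Rightarrow> nat \<Rightarrow> (nat \<Rightarrow> nat \<Rightarrow> bool) \<Rightarrow> nat" where
  "cf_min_size n m A = (LEAST s. \<exists>gs outs. computes n m gs outs A \<and> cancellation_free n gs \<and> length gs = s)"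

definition cancellation_ratio :: "nat \<Rightarrow> real" where
  "cancellation_ratio n = Max {real (cf_min_size n n A) / real (min_size n n A) | A.
       \<forall>i j. A i j \<longrightarrow> i < n \<and> j < n}"

end

theory Submission
  imports Defs
begin

text \<open>Take the matrix whose rows are \<open>{x\<^sub>0,\<dots>,x\<^sub>i\<^sub>+\<^sub>1}\<close> for \<open>i < n - 1\<close> and
\<open>{x\<^sub>1,\<dots>,x\<^sub>n\<^sub>-\<^sub>1}\<close>. A prefix chain of \<open>n - 1\<close> gates computes the first \<open>n - 1\<close> rows,
and one more gate cancels \<open>x\<^sub>0\<close> from the full sum, so \<open>n\<close> gates suffice.
In a cancellation-free circuit the two children of every gate have disjoint supports, so the
gates below a node form a binary tree with disjoint leaf sets: a node with support of size \<open>s\<close>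
has at least \<open>s - 1\<close> gates below it, none of which contains a variable outside that support.
Hence the last row needs \<open>n - 2\<close> gates avoiding \<open>x\<^sub>0\<close>, while the other \<open>n - 1\<close> rows are
distinct gates containing \<open>x\<^sub>0\<close>: at least \<open>2n - 3\<close> gates in total.\<close>

lemma node_values_snoc:
  "node_values n (gs @ [(a, b)]) =
     node_values n gs @ [(\<lambda>j. (node_values n gs ! a) j \<noteq> (node_values n gs ! b) j)]"
  unfolding node_values_def by simp

lemma length_node_values: "length (node_values n gs) = n + length gs"
  by (induction gs rule: rev_induct) (auto simp: node_values_def)

lemma node_values_append: "\<exists>ys. node_values n (gs @ hs) = node_values n gs @ ys"
proof (induction hs rule: rev_induct)
  case (snoc h hs)
  then show ?case
    by (cases h) (auto simp: node_values_snoc[of n "gs @ hs", simplified])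
qed simp

lemma kappa_append: "v < n + length gs \<Longrightarrow> kappa n (gs @ hs) v = kappa n gs v"
  using node_values_append[of n gs hs]
  by (auto simp: kappa_def nth_append length_node_values)

lemma kappa_input: "i < n \<Longrightarrow> kappa n gs i = (\<lambda>j. j = i)"
  using kappa_append[of i n "[]" gs] by (simp add: kappa_def node_values_def)

lemma kappa_gate:
  assumes wf: "wf_circuit n gs m outs" and k: "k < length gs"
  shows "kappa n gs (n + k) = (\<lambda>j. kappa n gs (fst (gs ! k)) j \<noteq> kappa n gs (snd (gs ! k)) j)"
proof -
  obtain a b where g: "gs ! k = (a, b)" by fastforce
  have ab: "a < n + k" "b < n + k" using wf k g by (auto simp: wf_circuit_def)
  define G where "G = take k gs"
  have lG: "length G = k" using k by (simp add: G_def)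
  have gs: "gs = G @ [(a, b)] @ drop (Suc k) gs"
    using id_take_nth_drop[OF k] g by (simp add: G_def)
  have prefix: "kappa n gs v = kappa n G v" if "v < n + k" for v
    using kappa_append[of v n G] that lG by (subst gs) simp
  have "kappa n gs (n + k) = kappa n (G @ [(a, b)]) (n + k)"
    using kappa_append[of "n + k" n "G @ [(a, b)]"] lG by (subst gs) simp
  also have "\<dots> = (\<lambda>j. kappa n G a j \<noteq> kappa n G b j)"
    by (simp add: kappa_def node_values_snoc nth_append length_node_values lG)
  finally show ?thesis using prefix ab g by simp
qed

lemma gate_cases:
  assumes "v < n + length gs" "\<not> v < n"
  obtains k where "v = n + k" "k < length gs"
  using assms by (metis add_less_cancel_left le_add_diff_inverse not_less)

lemma circuit_edgesE:
  assumes "(c, v) \<in> circuit_edges n gs"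
  obtains k where "v = n + k" "k < length gs" "c = fst (gs ! k) \<or> c = snd (gs ! k)"
  using assms by (auto simp: circuit_edges_def)

lemma children_in_circuit_edges:
  "k < length gs \<Longrightarrow> (fst (gs ! k), n + k) \<in> circuit_edges n gs"
  "k < length gs \<Longrightarrow> (snd (gs ! k), n + k) \<in> circuit_edges n gs"
  by (auto simp: circuit_edges_def)

lemma circuit_edges_rtrancl_le:
  assumes wf: "wf_circuit n gs m outs" and "(x, y) \<in> (circuit_edges n gs)\<^sup>*"
  shows "x \<le> y"
  using assms(2)
proof (induction rule: rtrancl_induct)
  case (step y z)
  then show ?case using wf by (auto simp: wf_circuit_def elim!: circuit_edgesE)
qed simp

definition support :: "nat \<Rightarrow> (nat \<times> nat) list \<Rightarrow> nat \<Rightarrow> nat set" where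
  "support n gs v = {j. kappa n gs v j}"

lemma support_input: "i < n \<Longrightarrow> support n gs i = {i}"
  by (simp add: support_def kappa_input)

lemma computes_iff_support:
  "computes n m gs outs A \<longleftrightarrow>
     wf_circuit n gs m outs \<and> (\<forall>i < m. support n gs (outs i) = {j. j < n \<and> A i j})"
  by (auto simp: computes_def support_def)

lemma support_gate:
  "wf_circuit n gs m outs \<Longrightarrow> k < length gs \<Longrightarrow>
     support n gs (n + k) = sym_diff (support n gs (fst (gs ! k))) (support n gs (snd (gs ! k)))"
  by (auto simp: support_def kappa_gate)

lemma support_subset_inputs:
  assumes wf: "wf_circuit n gs m outs"
  shows "v < n + length gs \<Longrightarrow> support n gs v \<subseteq> {..<n}"
proof (induction v rule: less_induct)
  case (less v)
  show ?case
  proof (cases "v < n")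
    case False
    with less.prems obtain k where v: "v = n + k" and k: "k < length gs" by (rule gate_cases)
    have "fst (gs ! k) < v" "snd (gs ! k) < v" using wf k v by (auto simp: wf_circuit_def)
    then show ?thesis using less v support_gate[OF wf k] by auto
  qed (simp add: support_input)
qed

lemma finite_support: "wf_circuit n gs m outs \<Longrightarrow> v < n + length gs \<Longrightarrow> finite (support n gs v)"
  by (rule finite_subset[OF support_subset_inputs]) auto

lemma cancellation_free_support_mono:
  "cancellation_free n gs \<Longrightarrow> (w, u) \<in> (circuit_edges n gs)\<^sup>* \<Longrightarrow> support n gs w \<subseteq> support n gs u"
  by (auto simp: cancellation_free_def support_def le_fun_def)

lemma cancellation_free_iff_disjoint_children:
  assumes wf: "wf_circuit n gs m outs"
  shows "cancellation_free n gs \<longleftrightarrow>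
    (\<forall>k < length gs. support n gs (fst (gs ! k)) \<inter> support n gs (snd (gs ! k)) = {})"
    (is "_ \<longleftrightarrow> ?disj")
proof
  assume cf: "cancellation_free n gs"
  show ?disj
  proof (intro allI impI)
    fix k assume k: "k < length gs"
    let ?A = "support n gs (fst (gs ! k))" and ?B = "support n gs (snd (gs ! k))"
    have "?A \<subseteq> support n gs (n + k)" "?B \<subseteq> support n gs (n + k)"
      using cancellation_free_support_mono[OF cf r_into_rtrancl] children_in_circuit_edges[OF k]
      by blast+
    then show "?A \<inter> ?B = {}" unfolding support_gate[OF wf k] by blast
  qed
next
  assume disj: ?disj
  have "support n gs w \<subseteq> support n gs u" if "(w, u) \<in> (circuit_edges n gs)\<^sup>*" for w u
    using that
  proof (induction rule: rtrancl_induct)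
    case (step y z)
    from step.hyps(2) obtain k where k: "z = n + k" "k < length gs"
      and y: "y = fst (gs ! k) \<or> y = snd (gs ! k)"
      by (rule circuit_edgesE)
    have "support n gs y \<subseteq> support n gs z"
      using y disj[rule_format, OF k(2)] unfolding k(1) support_gate[OF wf k(2)] by blast
    with step.IH show ?case by blast
  qed simp
  then show "cancellation_free n gs" by (auto simp: cancellation_free_def support_def le_fun_def)
qed

lemma cancellation_free_support_nonempty:
  assumes wf: "wf_circuit n gs m outs" and cf: "cancellation_free n gs"
  shows "v < n + length gs \<Longrightarrow> support n gs v \<noteq> {}"
proof (induction v rule: less_induct)
  case (less v)
  show ?case
  proof (cases "v < n")
    case False
    with less.prems obtain k where v: "v = n + k" and k: "k < length gs" by (rule gate_cases)
    have "fst (gs ! k) < v" using wf k v by (auto simp: wf_circuit_def)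
    then have "support n gs (fst (gs ! k)) \<noteq> {}" using less by simp
    moreover have "support n gs (fst (gs ! k)) \<subseteq> support n gs v"
      using cancellation_free_support_mono[OF cf r_into_rtrancl]
        children_in_circuit_edges(1)[OF k] v by blast
    ultimately show ?thesis by blast
  qed (simp add: support_input)
qed

definition gates_below :: "nat \<Rightarrow> (nat \<times> nat) list \<Rightarrow> nat \<Rightarrow> nat set" where
  "gates_below n gs u = {v. n \<le> v \<and> v < n + length gs \<and> (v, u) \<in> (circuit_edges n gs)\<^sup>*}"

lemma finite_gates_below: "finite (gates_below n gs u)"
  by (rule finite_subset[of _ "{..<n + length gs}"]) (auto simp: gates_below_def)

lemma cancellation_free_gates_below_disjoint:
  assumes wf: "wf_circuit n gs m outs" and cf: "cancellation_free n gs"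
    and disj: "support n gs a \<inter> support n gs b = {}"
  shows "gates_below n gs a \<inter> gates_below n gs b = {}"
proof (rule ccontr)
  assume "gates_below n gs a \<inter> gates_below n gs b \<noteq> {}"
  then obtain v where "v \<in> gates_below n gs a" "v \<in> gates_below n gs b" by blast
  then have "support n gs v \<subseteq> support n gs a \<inter> support n gs b" "v < n + length gs"
    using cancellation_free_support_mono[OF cf] by (auto simp: gates_below_def)
  with cancellation_free_support_nonempty[OF wf cf] disj show False by blast
qed

text \<open>The gates below a node of a cancellation-free circuit form a binary tree whose leaves are
the inputs of its support.\<close>

lemma cancellation_free_card_support_le:
  assumes wf: "wf_circuit n gs m outs" and cf: "cancellation_free n gs"
  shows "u < n + length gs \<Longrightarrow> card (support n gs u) \<le> card (gates_below n gs u) + 1"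
proof (induction u rule: less_induct)
  case (less u)
  show ?case
  proof (cases "u < n")
    case False
    with less.prems obtain k where u: "u = n + k" and k: "k < length gs" by (rule gate_cases)
    define a b where "a = fst (gs ! k)" and "b = snd (gs ! k)"
    have ab: "a < u" "b < u" using wf k u by (auto simp: wf_circuit_def a_def b_def)
    have disj: "support n gs a \<inter> support n gs b = {}"
      using cancellation_free_iff_disjoint_children[OF wf] cf k by (simp add: a_def b_def)
    have "card (support n gs u) = card (support n gs a) + card (support n gs b)"
    proof -
      have "support n gs u = support n gs a \<union> support n gs b"
        using support_gate[OF wf k] disj u by (auto simp: a_def b_def)
      then show ?thesis
        using disj finite_support[OF wf] ab less.prems by (simp add: card_Un_disjoint)
    qed
    also have "\<dots> \<le> card (gates_below n gs a) + card (gates_below n gs b) + 2"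
      using less.IH[of a] less.IH[of b] ab less.prems by simp
    also have "\<dots> = card (insert u (gates_below n gs a \<union> gates_below n gs b)) + 1"
    proof -
      have "u \<notin> gates_below n gs a \<union> gates_below n gs b"
        using circuit_edges_rtrancl_le[OF wf] ab by (force simp: gates_below_def)
      then show ?thesis
        using cancellation_free_gates_below_disjoint[OF wf cf disj] finite_gates_below
        by (simp add: card_Un_disjoint)
    qed
    also have "\<dots> \<le> card (gates_below n gs u) + 1"
    proof -
      have "(a, u) \<in> circuit_edges n gs" "(b, u) \<in> circuit_edges n gs"
        using children_in_circuit_edges[OF k] u by (auto simp: a_def b_def)
      then have "insert u (gates_below n gs a \<union> gates_below n gs b) \<subseteq> gates_below n gs u"
        using less.prems False by (auto simp: gates_below_def intro: rtrancl_into_rtrancl)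
      then show ?thesis using finite_gates_below by (simp add: card_mono)
    qed
    finally show ?thesis .
  qed (simp add: support_input)
qed

lemma min_size_le: "computes n m gs outs A \<Longrightarrow> min_size n m A \<le> length gs"
  unfolding min_size_def by (rule Least_le) blast

lemma min_size_attained:
  assumes "computes n m gs outs A"
  obtains gs' outs' where "computes n m gs' outs' A" "length gs' = min_size n m A"
  using LeastI_ex[of "\<lambda>s. \<exists>gs outs. computes n m gs outs A \<and> length gs = s"] assms
  unfolding min_size_def by blast

lemma cf_min_size_attained:
  assumes "computes n m gs outs A" "cancellation_free n gs"
  obtains gs' outs' where "computes n m gs' outs' A" "cancellation_free n gs'"
    "length gs' = cf_min_size n m A"
  using LeastI_ex[of "\<lambda>s. \<exists>gs outs. computes n m gs outs A \<and> cancellation_free n gs \<and> length gs = s"]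
    assms
  unfolding cf_min_size_def by blast

lemma min_size_pos:
  assumes c: "computes n m gs outs A" and i: "i < m" and j: "j < n" "j' < n" "j \<noteq> j'"
    and A: "A i j" "A i j'"
  shows "0 < min_size n m A"
proof (rule ccontr)
  assume "\<not> 0 < min_size n m A"
  obtain gs' outs' where c': "computes n m gs' outs' A" and "length gs' = 0"
    using min_size_attained[OF c] \<open>\<not> 0 < min_size n m A\<close> by (metis neq0_conv)
  then have "outs' i < n" using i by (simp add: computes_def wf_circuit_def)
  then have "kappa n gs' (outs' i) = (\<lambda>l. l = outs' i)" by (rule kappa_input)
  moreover have "kappa n gs' (outs' i) j" "kappa n gs' (outs' i) j'"
    using c' i j A by (auto simp: computes_def)
  ultimately show False using j by simp
qed

lemma finite_square_matrices: "finite {A :: nat \<Rightarrow> nat \<Rightarrow> bool. \<forall>i j. A i j \<longrightarrow> i < n \<and> j < n}"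
proof (rule finite_imageD)
  let ?graph = "\<lambda>A :: nat \<Rightarrow> nat \<Rightarrow> bool. {(i, j). A i j}"
  show "finite (?graph ` {A. \<forall>i j. A i j \<longrightarrow> i < n \<and> j < n})"
    by (rule finite_subset[of _ "Pow ({..<n} \<times> {..<n})"]) auto
  show "inj_on ?graph {A. \<forall>i j. A i j \<longrightarrow> i < n \<and> j < n}"
  proof (rule inj_onI)
    fix A B :: "nat \<Rightarrow> nat \<Rightarrow> bool"
    assume "?graph A = ?graph B"
    then have "A i j = B i j" for i j by (simp add: set_eq_iff)
    then show "A = B" by blast
  qed
qed

lemma cancellation_ratio_ge:
  assumes "\<forall>i j. A i j \<longrightarrow> i < n \<and> j < n"
  shows "real (cf_min_size n n A) / real (min_size n n A) \<le> cancellation_ratio n"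
proof -
  let ?ratio = "\<lambda>A. real (cf_min_size n n A) / real (min_size n n A)"
  let ?M = "{A :: nat \<Rightarrow> nat \<Rightarrow> bool. \<forall>i j. A i j \<longrightarrow> i < n \<and> j < n}"
  have "{?ratio A | A. \<forall>i j. A i j \<longrightarrow> i < n \<and> j < n} = ?ratio ` ?M" by auto
  then show ?thesis
    unfolding cancellation_ratio_def using finite_square_matrices assms by (auto intro: Max_ge)
qed

definition staircase :: "nat \<Rightarrow> nat \<Rightarrow> nat \<Rightarrow> bool" where
  "staircase n i j \<longleftrightarrow> i < n \<and> j < n \<and> (if i < n - 1 then j \<le> Suc i else 1 \<le> j)"

lemma staircase_rows:
  "i < n - 1 \<Longrightarrow> {j. j < n \<and> staircase n i j} = {..Suc i}"
  "{j. j < n \<and> staircase n (n - 1) j} = {1..<n}"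
  by (auto simp: staircase_def)

lemma cancellation_free_staircase_size_ge:
  assumes n: "2 \<le> n" and c: "computes n n gs outs (staircase n)" and cf: "cancellation_free n gs"
  shows "2 * n - 3 \<le> length gs"
proof -
  have wf: "wf_circuit n gs n outs" and outs: "\<And>i. i < n \<Longrightarrow> outs i < n + length gs"
    using c by (auto simp: computes_def wf_circuit_def)
  have row: "support n gs (outs i) = {..Suc i}" if "i < n - 1" for i
    using c that staircase_rows(1)[OF that] by (simp add: computes_iff_support)
  define r where "r = outs (n - 1)"
  have r: "support n gs r = {1..<n}" "r < n + length gs"
    using c outs[of "n - 1"] n staircase_rows(2) by (auto simp: computes_iff_support r_def)
  define G0 where "G0 = {v. n \<le> v \<and> v < n + length gs \<and> 0 \<in> support n gs v}"
  have fin: "finite G0" by (rule finite_subset[of _ "{..<n + length gs}"]) (auto simp: G0_def)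
  have "n - 2 \<le> card (gates_below n gs r)"
    using cancellation_free_card_support_le[OF wf cf r(2)] r(1) by simp
  moreover have "gates_below n gs r \<inter> G0 = {}"
    using cancellation_free_support_mono[OF cf] r(1) by (fastforce simp: gates_below_def G0_def)
  moreover have "n - 1 \<le> card G0"
  proof -
    have "inj_on (support n gs \<circ> outs) {..<n - 1}"
    proof (rule inj_onI)
      fix i i' assume "i \<in> {..<n - 1}" "i' \<in> {..<n - 1}"
        and "(support n gs \<circ> outs) i = (support n gs \<circ> outs) i'"
      then have "{..Suc i} = {..Suc i'}" using row by simp
      then show "i = i'" by simp
    qed
    then have "card (outs ` {..<n - 1}) = n - 1"
      by (simp add: card_image inj_on_imageI2)
    moreover have "outs ` {..<n - 1} \<subseteq> G0"
    proof
      fix v assume "v \<in> outs ` {..<n - 1}"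
      then obtain i where i: "i < n - 1" "v = outs i" by auto
      then have sv: "support n gs v = {..Suc i}" using row by simp
      have "n \<le> v"
      proof (rule ccontr)
        assume "\<not> n \<le> v"
        then have "card (support n gs v) = 1" by (simp add: support_input)
        with sv show False by simp
      qed
      then show "v \<in> G0" using outs[of i] i sv by (simp add: G0_def)
    qed
    ultimately show ?thesis using fin by (metis card_mono)
  qed
  moreover have "card (gates_below n gs r \<union> G0) \<le> card {n..<n + length gs}"
    by (rule card_mono) (auto simp: gates_below_def G0_def)
  ultimately show ?thesis using fin finite_gates_below n by (simp add: card_Un_disjoint)
qed

text \<open>Gate \<open>k\<close> of the prefix chain computes \<open>x\<^sub>0 + \<dots> + x\<^sub>k\<^sub>+\<^sub>1\<close>; gate \<open>t\<close> of the
suffix chain computes \<open>x\<^sub>1 + \<dots> + x\<^sub>t\<^sub>+\<^sub>2\<close> and sits at node \<open>n + (n - 1) + t\<close> when it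
follows the prefix chain.\<close>

definition prefix_gate :: "nat \<Rightarrow> nat \<Rightarrow> nat \<times> nat" where
  "prefix_gate n k = (if k = 0 then (0, 1) else (n + k - 1, Suc k))"

definition suffix_gate :: "nat \<Rightarrow> nat \<Rightarrow> nat \<times> nat" where
  "suffix_gate n t = (if t = 0 then (1, 2) else (n + (n - 2) + t, t + 2))"

definition prefix_chain :: "nat \<Rightarrow> (nat \<times> nat) list" where
  "prefix_chain n = map (prefix_gate n) [0..<n - 1]"

definition staircase_circuit :: "nat \<Rightarrow> (nat \<times> nat) list" where
  "staircase_circuit n = prefix_chain n @ [(n + (n - 2), 0)]"

definition staircase_cf_circuit :: "nat \<Rightarrow> (nat \<times> nat) list" where
  "staircase_cf_circuit n = prefix_chain n @ map (suffix_gate n) [0..<n - 2]"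

definition staircase_outputs :: "nat \<Rightarrow> nat \<Rightarrow> nat \<Rightarrow> nat" where
  "staircase_outputs n r i = (if i < n - 1 then n + i else r)"

lemma staircase_outputs_computes:
  assumes wf: "wf_circuit n gs n (staircase_outputs n r)"
    and prefix: "\<And>i. i < n - 1 \<Longrightarrow> support n gs (n + i) = {..Suc i}"
    and last: "support n gs r = {1..<n}"
  shows "computes n n gs (staircase_outputs n r) (staircase n)"
  unfolding computes_iff_support
proof (intro conjI wf allI impI)
  fix i assume "i < n"
  show "support n gs (staircase_outputs n r i) = {j. j < n \<and> staircase n i j}"
  proof (cases "i < n - 1")
    case True
    then show ?thesis using prefix staircase_rows(1) by (simp add: staircase_outputs_def)
  next
    case False
    then have "i = n - 1" using \<open>i < n\<close> by simp
    then show ?thesis using last staircase_rows(2) by (simp add: staircase_outputs_def)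
  qed
qed

lemma length_prefix_chain: "length (prefix_chain n) = n - 1"
  by (simp add: prefix_chain_def)

lemma wf_prefix_chain: "wf_circuit n (prefix_chain n) 0 outs"
  by (auto simp: wf_circuit_def prefix_chain_def prefix_gate_def)

lemma support_prefix_chain:
  assumes "k < n - 1"
  shows "support n (prefix_chain n @ hs) (n + k) = {..Suc k}"
proof -
  have gate: "support n (prefix_chain n) (n + k) =
      sym_diff (support n (prefix_chain n) (fst (prefix_gate n k))) {Suc k}" if "k < n - 1" for k
  proof -
    have k: "k < length (prefix_chain n)" using that by (simp add: length_prefix_chain)
    have "prefix_chain n ! k = prefix_gate n k" "snd (prefix_gate n k) = Suc k" "Suc k < n"
      using that by (simp_all add: prefix_chain_def prefix_gate_def)
    then show ?thesis
      using support_gate[OF wf_prefix_chain k] by (simp only: support_input)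
  qed
  have "support n (prefix_chain n) (n + k) = {..Suc k}"
    using assms
  proof (induction k)
    case 0
    have "fst (prefix_gate n 0) = 0" "0 < n" using 0 by (simp_all add: prefix_gate_def)
    then show ?case using gate[OF 0] support_input[of 0 n] by (auto simp: atMost_Suc)
  next
    case (Suc k)
    have "fst (prefix_gate n (Suc k)) = n + k" by (simp add: prefix_gate_def)
    then show ?case using gate[OF Suc.prems] Suc by (auto simp: atMost_Suc)
  qed
  moreover have "n + k < n + length (prefix_chain n)" using assms by (simp add: prefix_chain_def)
  ultimately show ?thesis by (simp add: support_def kappa_append)
qed

lemma staircase_circuit_computes:
  assumes n: "2 \<le> n"
  shows "computes n n (staircase_circuit n) (staircase_outputs n (n + (n - 1))) (staircase n)"
proof -
  let ?gs = "staircase_circuit n"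
  have len: "length ?gs = n" using n by (simp add: staircase_circuit_def prefix_chain_def)
  have wf: "wf_circuit n ?gs n (staircase_outputs n (n + (n - 1)))"
    using n by (auto simp: wf_circuit_def staircase_circuit_def prefix_chain_def prefix_gate_def
        nth_append staircase_outputs_def)
  have prefix: "support n ?gs (n + i) = {..Suc i}" if "i < n - 1" for i
    using support_prefix_chain[OF that] by (simp add: staircase_circuit_def)
  have "support n ?gs (n + (n - 1)) = sym_diff {..Suc (n - 2)} {0}"
    using support_gate[OF wf, of "n - 1"] prefix[of "n - 2"] n len
    by (simp add: staircase_circuit_def prefix_chain_def nth_append support_input)
  also have "\<dots> = {1..<n}" using n by auto
  finally show ?thesis using staircase_outputs_computes[OF wf prefix] by simp
qed

lemma staircase_cf_circuit_nth_prefix: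
  "k < n - 1 \<Longrightarrow> staircase_cf_circuit n ! k = prefix_gate n k"
  by (simp add: staircase_cf_circuit_def prefix_chain_def nth_append)

lemma staircase_cf_circuit_nth_suffix:
  "t < n - 2 \<Longrightarrow> staircase_cf_circuit n ! (n - 1 + t) = suffix_gate n t"
  using nth_append_length_plus[of "prefix_chain n" "map (suffix_gate n) [0..<n - 2]" t]
  by (simp add: staircase_cf_circuit_def length_prefix_chain)

lemma length_staircase_cf_circuit: "length (staircase_cf_circuit n) = n - 1 + (n - 2)"
  by (simp add: staircase_cf_circuit_def prefix_chain_def)

lemma staircase_cf_circuit_suffix_gateE:
  assumes "k < length (staircase_cf_circuit n)" "\<not> k < n - 1"
  obtains t where "k = n - 1 + t" "t < n - 2" "staircase_cf_circuit n ! k = suffix_gate n t"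
proof -
  obtain t where "k = n - 1 + t" "t < n - 2"
    using assms length_staircase_cf_circuit by (metis add_less_cancel_left le_add_diff_inverse not_less)
  with that show ?thesis using staircase_cf_circuit_nth_suffix by blast
qed

lemma wf_staircase_cf_circuit:
  assumes n: "3 \<le> n"
  shows "wf_circuit n (staircase_cf_circuit n) n (staircase_outputs n (n + (n - 1) + (n - 3)))"
  unfolding wf_circuit_def
proof (rule conjI; intro allI impI)
  fix k assume k: "k < length (staircase_cf_circuit n)"
  show "fst (staircase_cf_circuit n ! k) < n + k \<and> snd (staircase_cf_circuit n ! k) < n + k \<and>
      fst (staircase_cf_circuit n ! k) \<noteq> snd (staircase_cf_circuit n ! k)"
  proof (cases "k < n - 1")
    case True
    then show ?thesis by (auto simp: staircase_cf_circuit_nth_prefix prefix_gate_def)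
  next
    case False
    with k obtain t where "k = n - 1 + t" "t < n - 2" "staircase_cf_circuit n ! k = suffix_gate n t"
      by (rule staircase_cf_circuit_suffix_gateE)
    then show ?thesis using n by (auto simp: suffix_gate_def)
  qed
next
  fix i assume "i < n"
  then show "staircase_outputs n (n + (n - 1) + (n - 3)) i < n + length (staircase_cf_circuit n)"
    using n by (auto simp: staircase_outputs_def length_staircase_cf_circuit)
qed

lemma support_suffix_gates:
  assumes n: "3 \<le> n" and t: "t < n - 2"
  shows "support n (staircase_cf_circuit n) (n + (n - 1) + t) = {1..t + 2}"
proof -
  let ?S = "support n (staircase_cf_circuit n)"
  have gate: "?S (n + (n - 1) + t) = sym_diff (?S (fst (suffix_gate n t))) {t + 2}"
    if "t < n - 2" for t
  proof -
    have k: "n - 1 + t < length (staircase_cf_circuit n)"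
      using that by (simp add: length_staircase_cf_circuit)
    have "snd (suffix_gate n t) = t + 2" "t + 2 < n"
      using that by (simp_all add: suffix_gate_def)
    then show ?thesis
      using support_gate[OF wf_staircase_cf_circuit[OF n] k]
      by (simp only: staircase_cf_circuit_nth_suffix[OF that] support_input add.assoc)
  qed
  show ?thesis
    using t
  proof (induction t)
    case 0
    have "fst (suffix_gate n 0) = 1" by (simp add: suffix_gate_def)
    then show ?case using gate[OF 0] support_input[of 1 n] n by auto
  next
    case (Suc t)
    have "fst (suffix_gate n (Suc t)) = n + (n - 1) + t" using n by (simp add: suffix_gate_def)
    then show ?case using gate[OF Suc.prems] Suc by (auto simp: atLeastAtMostSuc_conv)
  qed
qed

lemma staircase_cf_circuit_computes:
  assumes n: "3 \<le> n"
  shows "computes n n (staircase_cf_circuit n) (staircase_outputs n (n + (n - 1) + (n - 3)))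
    (staircase n)"
proof (rule staircase_outputs_computes[OF wf_staircase_cf_circuit[OF n]])
  show "support n (staircase_cf_circuit n) (n + i) = {..Suc i}" if "i < n - 1" for i
    using support_prefix_chain[OF that] by (simp add: staircase_cf_circuit_def)
  show "support n (staircase_cf_circuit n) (n + (n - 1) + (n - 3)) = {1..<n}"
    using support_suffix_gates[OF n, of "n - 3"] n by auto
qed

lemma cancellation_free_staircase_cf_circuit:
  assumes n: "3 \<le> n"
  shows "cancellation_free n (staircase_cf_circuit n)"
  unfolding cancellation_free_iff_disjoint_children[OF wf_staircase_cf_circuit[OF n]]
proof (intro allI impI)
  let ?gs = "staircase_cf_circuit n"
  fix k assume k: "k < length ?gs"
  have "snd (?gs ! k) < n \<and> support n ?gs (fst (?gs ! k)) \<subseteq> {..<snd (?gs ! k)}"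
  proof (cases "k < n - 1")
    case True
    show ?thesis
    proof (cases k)
      case 0
      then show ?thesis
        using True by (simp add: staircase_cf_circuit_nth_prefix prefix_gate_def support_input)
    next
      case (Suc k')
      have "?gs ! k = (n + k', Suc k)"
        using True Suc by (simp add: staircase_cf_circuit_nth_prefix prefix_gate_def)
      moreover have "support n ?gs (n + k') = {..Suc k'}"
        using support_prefix_chain[of k'] True Suc by (simp add: staircase_cf_circuit_def)
      ultimately show ?thesis using True Suc by auto
    qed
  next
    case False
    with k obtain t where t: "t < n - 2" and gate: "?gs ! k = suffix_gate n t"
      by (rule staircase_cf_circuit_suffix_gateE)
    show ?thesis
    proof (cases t)
      case 0
      then show ?thesis using gate n by (simp add: suffix_gate_def support_input)
    next
      case (Suc t')
      have "?gs ! k = (n + (n - 1) + t', t + 2)" using gate n Suc by (simp add: suffix_gate_def)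
      moreover have "support n ?gs (n + (n - 1) + t') = {1..t' + 2}"
        using support_suffix_gates[OF n, of t'] t Suc by simp
      ultimately show ?thesis using t Suc by auto
    qed
  qed
  then show "support n ?gs (fst (?gs ! k)) \<inter> support n ?gs (snd (?gs ! k)) = {}"
    by (auto simp: support_input)
qed

lemma staircase_min_size:
  assumes n: "2 \<le> n"
  shows "0 < min_size n n (staircase n)" "min_size n n (staircase n) \<le> n"
proof -
  have c: "computes n n (staircase_circuit n) (staircase_outputs n (n + (n - 1))) (staircase n)"
    using staircase_circuit_computes[OF n] .
  show "0 < min_size n n (staircase n)"
    by (rule min_size_pos[OF c, of 0 0 1]) (use n in \<open>auto simp: staircase_def\<close>)
  show "min_size n n (staircase n) \<le> n"
    using min_size_le[OF c] n by (simp add: staircase_circuit_def prefix_chain_def)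
qed

lemma staircase_cf_size_ge_ratio:
  assumes n: "3 \<le> n" and "computes n n gs outs (staircase n)" "cancellation_free n gs"
  shows "(2 - 3 / real n) * real (min_size n n (staircase n)) \<le> real (length gs)"
proof -
  have "(2 - 3 / real n) * real (min_size n n (staircase n)) \<le> (2 - 3 / real n) * real n"
    using staircase_min_size(2) n by (intro mult_left_mono) (auto simp: field_simps)
  also have "\<dots> = real (2 * n - 3)" using n by (simp add: field_simps of_nat_diff)
  also have "\<dots> \<le> real (length gs)"
    using cancellation_free_staircase_size_ge[of n gs outs] assms by simp
  finally show ?thesis .
qed

lemma cancellation_ratio_staircase_ge:
  assumes n: "3 \<le> n"
  shows "2 - 3 / real n \<le> cancellation_ratio n"
proof -
  obtain gs outs where "computes n n gs outs (staircase n)" "cancellation_free n gs"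
    "length gs = cf_min_size n n (staircase n)"
    using cf_min_size_attained staircase_cf_circuit_computes cancellation_free_staircase_cf_circuit n
    by metis
  then have "(2 - 3 / real n) * real (min_size n n (staircase n)) \<le> real (cf_min_size n n (staircase n))"
    using staircase_cf_size_ge_ratio[OF n] by metis
  then have "2 - 3 / real n \<le> real (cf_min_size n n (staircase n)) / real (min_size n n (staircase n))"
    using staircase_min_size(1) n by (simp add: pos_le_divide_eq)
  also have "\<dots> \<le> cancellation_ratio n"
    by (rule cancellation_ratio_ge) (simp add: staircase_def)
  finally show ?thesis .
qed

theorem theorem2:
  shows "\<exists>(S :: nat set) (A :: nat \<Rightarrow> nat \<Rightarrow> nat \<Rightarrow> bool) (\<epsilon> :: nat \<Rightarrow> real).
           infinite S \<and> \<epsilon> \<longlonglongrightarrow> 0 \<and>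
           (\<forall>n \<in> S. min_size n n (A n) > 0 \<and>
              (\<forall>gs outs. computes n n gs outs (A n) \<and> cancellation_free n gs \<longrightarrow>
                 real (length gs) \<ge> (2 - \<epsilon> n) * real (min_size n n (A n))))
         \<and> (\<exists>\<delta> :: nat \<Rightarrow> real. \<delta> \<longlonglongrightarrow> 0 \<and> (\<forall>n. cancellation_ratio n \<ge> 2 - \<delta> n))"
proof -
  have lim: "(\<lambda>n. 3 / real n) \<longlonglongrightarrow> 0"
    using tendsto_mult_right_zero[OF lim_inverse_n', of 3] by simp
  have "\<forall>n \<in> {3..}. min_size n n (staircase n) > 0 \<and>
      (\<forall>gs outs. computes n n gs outs (staircase n) \<and> cancellation_free n gs \<longrightarrow>
         real (length gs) \<ge> (2 - 3 / real n) * real (min_size n n (staircase n)))"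
    using staircase_min_size(1) staircase_cf_size_ge_ratio by auto
  moreover
  define \<delta> where "\<delta> n = (if n < 3 then 2 - cancellation_ratio n else 3 / real n)" for n
  have "\<delta> \<longlonglongrightarrow> 0"
    by (rule Lim_transform_eventually[OF lim]) (auto simp: \<delta>_def eventually_sequentially intro: exI[of _ 3])
  moreover have "\<forall>n. cancellation_ratio n \<ge> 2 - \<delta> n"
    using cancellation_ratio_staircase_ge by (auto simp: \<delta>_def)
  ultimately show ?thesis using infinite_Ici[of "3 :: nat"] lim by blast
qed

end
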